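(* Let $n\ge 2$, $\sigma\in\{0,1\}$, and let $V$, $\Omega$, $\Omega_0$ and the action $\rho$ be as in the context. Let $G$ be a subgroup of $S_n\times O(2)$ such that $V(\rho(g)u)=V(u)$ for all $g\in G$ and $u\in\Omega$, and let $H$ be a subgroup of $G$. Then on each connected component of $$\Omega_0^H=\Omega_0\cap\mathrm{Fix}(H)=\{u\in\Omega_0:\rho(g)u=u\text{ for all }g\in H\}$$ the restriction of $V$ attains a minimum, and every such minimizer $\mathbf a$ is a critical point of $V$ on $\Omega$, i.e. $\nabla V(\mathbf a)=0$.
   Context: For $u=(u_1,\dots,u_n)\in(\mathbb R^2)^n=\mathbb R^{2n}$ let $$V(u)=\sum_{j=1}^{n-1}U(|u_{j+1}-u_j|^2)+\sigma\,U(|u_n-u_1|^2)+\sum_{1\le j<k\le n}W(|u_j-u_k|^2),$$ where $U(x)=x-2x^{1/2}$ and $W\in C^2((0,\infty))$ satisfies $\lim_{x\to0}W(x)=\lim_{x\to0}(-W'(x))=+\infty$ and $\lim_{x\to\infty}W(x)=\lim_{x\to\infty}W'(x)=0$. $V$ is defined on $\Omega=\{u\in\mathbb R^{2n}:u_j\neq u_k\text{ for }j\ne k\}$, and $\Omega_0=\{u\in\Omega:\sum_{j=1}^n u_j=0\}$. The group $S_n$ of permutations of $\{1,\dots,n\}$ and $O(2)=S^1\cup\tilde\kappa S^1$ act on $\mathbb R^{2n}$ by $(\rho(\gamma)u)_j=u_{\gamma(j)}$ for $\gamma\in S_n$, $(\rho(\theta)u)_j=e^{-J\theta}u_j$ for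 $\theta\in S^1$, and $(\rho(\tilde\kappa)u)_j=Ru_j$, where $J=\begin{pmatrix}0&-1\\1&0\end{pmatrix}$ and $R=\begin{pmatrix}1&0\\0&-1\end{pmatrix}$. *)

theory Defs
  imports "HOL-Analysis.Analysis"
begin

text \<open>Configurations u = (u_1,...,u_n) in (R^2)^n are elements of type real^2^'n,
  where the finite type 'n indexes the n points (n = CARD('n)).  The labelling
  1..n of the paper is given by a bijection e from {0..<n} onto 'n
  (u_j of the paper is u $ e (j-1)).\<close>

definition Upot :: "real \<Rightarrow> real" where
  "Upot x = x - 2 * sqrt x"

definition Vpot :: "(nat \<Rightarrow> 'n::finite) \<Rightarrow> real \<Rightarrow> (real \<Rightarrow> real) \<Rightarrow> real^2^'n \<Rightarrow> real" where
  "Vpot e \<sigma> W u =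
     (\<Sum>j<CARD('n) - 1. Upot ((norm (u $ e (Suc j) - u $ e j))\<^sup>2))
     + \<sigma> * Upot ((norm (u $ e (CARD('n) - 1) - u $ e 0))\<^sup>2)
     + (\<Sum>j<CARD('n). \<Sum>k\<in>{Suc j..<CARD('n)}. W ((norm (u $ e j - u $ e k))\<^sup>2))"

definition Omega :: "(real^2^'n::finite) set" where
  "Omega = {u. \<forall>j k. j \<noteq> k \<longrightarrow> u $ j \<noteq> u $ k}"

definition Omega0 :: "(real^2^'n::finite) set" where
  "Omega0 = {u \<in> Omega. (\<Sum>j\<in>UNIV. u $ j) = 0}"

text \<open>S_n x O(2) is realised as pairs (gamma, A) of a permutation gamma of the index
  type and an orthogonal 2x2 matrix A (O(2) = S^1 \<union> kappa S^1 acting on R^2 through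
  e^{-J theta} and R is exactly the group of orthogonal 2x2 matrices).\<close>

definition rho :: "('n::finite \<Rightarrow> 'n) \<times> (real^2^2) \<Rightarrow> real^2^'n \<Rightarrow> real^2^'n" where
  "rho g u = (\<chi> j. snd g *v (u $ fst g j))"

definition SnO2 :: "(('n::finite \<Rightarrow> 'n) \<times> (real^2^2)) set" where
  "SnO2 = {(\<gamma>, A). \<gamma> permutes UNIV \<and> orthogonal_matrix A}"

definition is_subgroup_SnO2 :: "(('n::finite \<Rightarrow> 'n) \<times> (real^2^2)) set \<Rightarrow> bool" where
  "is_subgroup_SnO2 G \<longleftrightarrow>
     G \<subseteq> SnO2 \<and> (id, mat 1) \<in> G \<and>
     (\<forall>g\<in>G. \<forall>h\<in>G. (fst g \<circ> fst h, snd g ** snd h) \<in> G) \<and>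
     (\<forall>g\<in>G. (inv (fst g), matrix_inv (snd g)) \<in> G)"

definition Fix :: "(('n::finite \<Rightarrow> 'n) \<times> (real^2^2)) set \<Rightarrow> (real^2^'n) set" where
  "Fix H = {u. \<forall>g\<in>H. rho g u = u}"

end

theory Submission
  imports Defs
begin

text \<open>On the centred fixed subspace \<open>Fix0 H = Fix H \<inter> {u. \<Sum>j. u\<^sub>j = 0}\<close> the potential is
  proper: since \<open>W\<close> blows up at 0, the points of a configuration in a sublevel set stay
  uniformly apart; since \<open>U\<close> is coercive, consecutive points stay uniformly close, and
  centring then bounds the whole configuration. A component of \<open>Omega \<inter> Fix0 H\<close> is relatively
  closed, so \<open>V\<close> attains its minimum on it. A minimiser \<open>a\<close> is a local minimum of \<open>V\<close> on
  the subspace \<open>Fix0 H\<close>, so the gradient of \<open>V\<close> at \<open>a\<close> is orthogonal to \<open>Fix0 H\<close>. But this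
  gradient is fixed by \<open>H\<close>, as \<open>V\<close> is \<open>H\<close>-invariant and \<open>H\<close> acts by isometries, and has zero
  sum, as \<open>V\<close> is translation invariant; so it lies in \<open>Fix0 H\<close> and vanishes (Palais'
  principle of symmetric criticality).\<close>

lemma continuous_on_pos_bounded_below:
  fixes W :: "real \<Rightarrow> real"
  assumes cont: "continuous_on {0<..} W" and lim0: "filterlim W at_top (at_right 0)"
    and lim_inf: "(W \<longlongrightarrow> l) at_top"
  obtains m where "\<And>x. x > 0 \<Longrightarrow> m \<le> W x"
proof -
  have "eventually (\<lambda>x. 0 \<le> W x) (at_right (0::real))"
    using lim0 by (simp add: filterlim_at_top)
  then obtain b where b: "b > 0" "\<And>x. 0 < x \<Longrightarrow> x < b \<Longrightarrow> 0 \<le> W x"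
    by (auto simp: eventually_at_right_field)
  have "eventually (\<lambda>x. l - 1 < W x) at_top"
    using lim_inf by (rule order_tendstoD) simp
  then obtain R where R: "\<And>x. x \<ge> R \<Longrightarrow> l - 1 < W x"
    by (auto simp: eventually_at_top_linorder)
  have "continuous_on {b..max b R} W"
    using cont by (rule continuous_on_subset) (use b in auto)
  then obtain x0 where x0: "\<forall>x\<in>{b..max b R}. W x0 \<le> W x"
    using continuous_attains_inf[OF compact_Icc, of b "max b R" W] by auto
  have "min 0 (min (l - 1) (W x0)) \<le> W x" if "x > 0" for x
  proof -
    consider "x < b" | "x \<in> {b..max b R}" | "x > max b R"
      by fastforce
    then show ?thesis
      using b(2)[of x] R[of x] x0 that by cases force+
  qed
  then show thesis by (rule that)
qed

lemma member_le_sum_bounded_below: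
  fixes f :: "'a \<Rightarrow> real"
  assumes "finite S" "i \<in> S" "K \<ge> 0" "\<And>j. j \<in> S \<Longrightarrow> -K \<le> f j"
  shows "f i \<le> sum f S + K * card S"
proof -
  have "f i + K \<le> (\<Sum>j\<in>S. f j + K)"
    using assms(1,2) by (intro member_le_sum) (auto dest: assms(4))
  then show ?thesis
    using assms(3) by (simp add: sum.distrib mult.commute)
qed

lemma norm_diff_le_steps:
  fixes x :: "nat \<Rightarrow> 'a::real_normed_vector"
  assumes "j \<le> k" "\<And>i. j \<le> i \<Longrightarrow> i < k \<Longrightarrow> norm (x (Suc i) - x i) \<le> D"
  shows "norm (x k - x j) \<le> real (k - j) * D"
  using assms
proof (induction k rule: dec_induct)
  case (step k)
  have "norm (x (Suc k) - x j) \<le> norm (x (Suc k) - x k) + norm (x k - x j)"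
    using norm_triangle_ineq[of "x (Suc k) - x k" "x k - x j"] by simp
  also have "\<dots> \<le> D + real (k - j) * D"
    using step by (intro add_mono) auto
  finally show ?case
    using step.hyps by (simp add: Suc_diff_le algebra_simps)
qed simp

lemma norm_le_if_centred:
  fixes u :: "'a::real_normed_vector^'n::finite" and d :: real
  assumes centred: "(\<Sum>j\<in>UNIV. u $ j) = 0" and d: "\<And>p q. norm (u $ p - u $ q) \<le> d"
  shows "norm u \<le> CARD('n) * d"
proof -
  have "real CARD('n) * norm (u $ p) \<le> real CARD('n) * d" for p
  proof -
    have "(\<Sum>q\<in>UNIV. u $ p - u $ q) = real CARD('n) *\<^sub>R u $ p"
      using centred by (simp add: sum_subtractf sum_constant_scaleR)
    then have "real CARD('n) * norm (u $ p) = norm (\<Sum>q\<in>UNIV. u $ p - u $ q)"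
      by simp
    also have "\<dots> \<le> (\<Sum>q\<in>UNIV. norm (u $ p - u $ q))"
      by (rule norm_sum)
    also have "\<dots> \<le> real CARD('n) * d"
      using sum_mono[of UNIV "\<lambda>q. norm (u $ p - u $ q)" "\<lambda>_. d", OF d] by simp
    finally show ?thesis .
  qed
  then have "norm (u $ p) \<le> d" for p
    by simp
  have "norm u \<le> (\<Sum>p\<in>UNIV. norm (u $ p))"
    unfolding norm_vec_def by (rule L2_set_le_sum) simp
  also have "\<dots> \<le> CARD('n) * d"
    using sum_mono[of UNIV "\<lambda>p. norm (u $ p)" "\<lambda>_. d"] \<open>\<And>p. norm (u $ p) \<le> d\<close> by simp
  finally show ?thesis .
qed

lemma continuous_attains_inf_proper:
  fixes f :: "'a::t2_space \<Rightarrow> real"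
  assumes C: "closedin (top_of_set Y) C" "C \<noteq> {}" and f: "continuous_on C f"
    and proper: "\<And>c. \<exists>K. compact K \<and> K \<subseteq> Y \<and> {u \<in> Y. f u \<le> c} \<subseteq> K"
  shows "\<exists>a\<in>C. \<forall>u\<in>C. f a \<le> f u"
proof -
  obtain u0 where u0: "u0 \<in> C"
    using C(2) by blast
  obtain K where K: "compact K" "K \<subseteq> Y" "{u \<in> Y. f u \<le> f u0} \<subseteq> K"
    using proper by blast
  obtain F where F: "closed F" "C = Y \<inter> F"
    using C(1) by (auto simp: closedin_closed)
  have "C \<inter> K = F \<inter> K"
    using F(2) K(2) by blast
  then have "compact (C \<inter> K)"
    using closed_Int_compact[OF F(1) K(1)] by simp
  moreover have u0K: "u0 \<in> C \<inter> K"
    using u0 K(3) F(2) by auto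
  moreover have "continuous_on (C \<inter> K) f"
    using f by (rule continuous_on_subset) blast
  ultimately obtain a where a: "a \<in> C \<inter> K" "\<forall>u\<in>C \<inter> K. f a \<le> f u"
    using continuous_attains_inf[of "C \<inter> K" f] by blast
  have "f a \<le> f u" if "u \<in> C" for u
  proof (cases "u \<in> K")
    case False
    then have "f u0 < f u"
      using K(3) that F(2) by force
    moreover have "f a \<le> f u0"
      using a(2) u0K by blast
    ultimately show ?thesis
      by simp
  qed (use a that in blast)
  then show ?thesis
    using a(1) by blast
qed

lemma has_derivative_eq_0_at_local_min_along:
  fixes f :: "'a::real_normed_vector \<Rightarrow> real"
  assumes deriv: "(f has_derivative D) (at a)"
    and min: "eventually (\<lambda>t. f a \<le> f (a + t *\<^sub>R v)) (at (0::real))"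
  shows "D v = 0"
proof -
  have "((\<lambda>t::real. a + t *\<^sub>R v) has_derivative (\<lambda>t. t *\<^sub>R v)) (at 0)"
    by (auto intro!: derivative_eq_intros)
  from has_derivative_compose[OF this] have
    "((\<lambda>t. f (a + t *\<^sub>R v)) has_derivative (\<lambda>t. D (t *\<^sub>R v))) (at 0)"
    using deriv by simp
  then have "(\<lambda>t. D (t *\<^sub>R v)) = (\<lambda>t. 0)"
    by (rule has_derivative_local_min) (use min in simp)
  then show ?thesis
    by (metis scaleR_one)
qed

lemma has_derivative_eq_0_on_subspace_at_local_min:
  fixes f :: "'a::real_normed_vector \<Rightarrow> real"
  assumes deriv: "(f has_derivative D) (at a)" and S: "subspace S" "a \<in> S" "v \<in> S"
    and min: "eventually (\<lambda>u. u \<in> S \<longrightarrow> f a \<le> f u) (nhds a)"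
  shows "D v = 0"
proof (rule has_derivative_eq_0_at_local_min_along[OF deriv])
  have "((\<lambda>t::real. a + t *\<^sub>R v) \<longlongrightarrow> a) (at 0)"
    by (auto intro!: tendsto_eq_intros)
  then have "eventually (\<lambda>t. a + t *\<^sub>R v \<in> S \<longrightarrow> f a \<le> f (a + t *\<^sub>R v)) (at (0::real))"
    using min by (rule filterlim_iff[THEN iffD1, rule_format])
  then show "eventually (\<lambda>t. f a \<le> f (a + t *\<^sub>R v)) (at 0)"
    using S by (simp add: subspace_add subspace_scale)
qed

lemma has_derivative_invariant:
  fixes f :: "'a::real_normed_vector \<Rightarrow> real"
  assumes deriv: "(f has_derivative D) (at a)" and T: "bounded_linear T" "T a = a"
    and \<Omega>: "open \<Omega>" "a \<in> \<Omega>" and inv: "\<And>u. u \<in> \<Omega> \<Longrightarrow> f (T u) = f u"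
  shows "D (T x) = D x"
proof -
  have "((\<lambda>u. f (T u)) has_derivative (\<lambda>x. D (T x))) (at a)"
    using has_derivative_compose[OF bounded_linear_imp_has_derivative[OF T(1)], of f D a]
      deriv T(2) by simp
  then have "(f has_derivative (\<lambda>x. D (T x))) (at a)"
    by (rule has_derivative_transform_within_open[OF _ \<Omega>]) (simp add: inv)
  then show ?thesis
    using has_derivative_unique[OF deriv] by metis
qed

lemma eventually_nhds_in_component_open_Int_convex:
  fixes S :: "'a::real_normed_vector set"
  assumes "open \<Omega>" "convex S" "C \<in> components (\<Omega> \<inter> S)" "a \<in> C"
  shows "eventually (\<lambda>u. u \<in> S \<longrightarrow> u \<in> C) (nhds a)"
proof -
  have "a \<in> \<Omega>"
    using assms(3,4) in_components_subset by blast
  then obtain \<epsilon> where \<epsilon>: "\<epsilon> > 0" "ball a \<epsilon> \<subseteq> \<Omega>"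
    using assms(1) open_contains_ball by blast
  have "ball a \<epsilon> \<inter> S \<subseteq> C"
    using assms(3,4) \<epsilon> in_components_subset[OF assms(3)]
    by (intro components_maximal[OF assms(3)] convex_connected convex_Int convex_ball assms(2))
      auto
  then show ?thesis
    by (intro eventually_mono[OF eventually_nhds_ball[OF \<epsilon>(1)]]) blast
qed

(* Symmetric criticality in linear form: the gradient of D is fixed by the isometries and
   orthogonal to Z, so it lies where D vanishes. *)
lemma symmetric_linear_functional_eq_0:
  fixes D :: "'a::euclidean_space \<Rightarrow> real"
  assumes D: "linear D"
    and isometries: "\<And>T x. T \<in> \<G> \<Longrightarrow> norm (T x) = norm x"
    and invariant: "\<And>T x. T \<in> \<G> \<Longrightarrow> D (T x) = D x"
    and vanishing: "\<And>z. z \<in> Z \<Longrightarrow> D z = 0"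
    and fixed: "\<And>x. (\<forall>T\<in>\<G>. T x = x) \<Longrightarrow> (\<forall>z\<in>Z. x \<bullet> z = 0) \<Longrightarrow> D x = 0"
  shows "D = (\<lambda>x. 0)"
proof -
  define w where "w = adjoint D 1"
  have Dw: "D x = x \<bullet> w" for x
    using adjoint_works[OF D, of x 1] by (simp add: w_def)
  have "T w = w" if "T \<in> \<G>" for T
  proof -
    have "(T w - w) \<bullet> (T w - w) = T w \<bullet> T w - 2 * (T w \<bullet> w) + w \<bullet> w"
      by (simp add: algebra_simps inner_commute)
    also have "\<dots> = 0"
      using isometries[OF that, of w] invariant[OF that, of w]
      by (simp add: Dw dot_square_norm)
    finally show ?thesis
      by simp
  qed
  moreover have "w \<bullet> z = 0" if "z \<in> Z" for z
    using vanishing[OF that] by (simp add: Dw inner_commute)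
  ultimately have "w \<bullet> w = 0"
    using fixed[of w] by (simp add: Dw)
  then show ?thesis
    by (simp add: Dw fun_eq_iff)
qed

lemma Upot_ge: "x \<ge> 0 \<Longrightarrow> -1 \<le> Upot x"
  using zero_le_power2[of "sqrt x - 1"] by (simp add: Upot_def power2_diff)

lemma norm_le_if_Upot_le:
  assumes "Upot ((norm x)\<^sup>2) \<le> M"
  shows "norm x \<le> \<bar>M\<bar> + 2"
proof (rule ccontr)
  assume "\<not> ?thesis"
  then have "(\<bar>M\<bar> + 2) * \<bar>M\<bar> < norm x * (norm x - 2)"
    by (intro mult_strict_mono') auto
  moreover have "Upot ((norm x)\<^sup>2) = norm x * (norm x - 2)"
    by (simp add: Upot_def power2_eq_square algebra_simps)
  moreover have "\<bar>M\<bar> \<le> (\<bar>M\<bar> + 2) * \<bar>M\<bar>"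
    by (simp add: algebra_simps)
  ultimately show False
    using assms by linarith
qed

lemma Upot_differentiable: "x > 0 \<Longrightarrow> Upot differentiable (at x)"
  unfolding Upot_def[abs_def]
  by (intro derivative_intros) (auto simp: real_differentiable_def intro: DERIV_real_sqrt)

lemma differentiable_pair_term:
  fixes p q :: "'n::finite"
  assumes "\<phi> differentiable (at ((norm (u $ p - u $ q))\<^sup>2))"
  shows "(\<lambda>u::real^2^'n. \<phi> ((norm (u $ p - u $ q))\<^sup>2)) differentiable (at u)"
proof (rule differentiable_compose[where g = "\<lambda>u. (norm (u $ p - u $ q))\<^sup>2", OF assms])
  show "(\<lambda>u::real^2^'n. (norm (u $ p - u $ q))\<^sup>2) differentiable (at u)"
    unfolding power2_norm_eq_inner
    by (intro differentiable_inner differentiable_diff bounded_linear_imp_differentiable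
        bounded_linear_vec_nth)
qed

lemma Vpot_differentiable:
  fixes e :: "nat \<Rightarrow> 'n::finite"
  assumes n2: "CARD('n) \<ge> 2" and inj: "inj_on e {..<CARD('n)}" and u: "u \<in> Omega"
    and W: "\<And>x. x > 0 \<Longrightarrow> W differentiable (at x)"
  shows "Vpot e \<sigma> W differentiable (at u)"
proof -
  have pos: "(norm (u $ e j - u $ e k))\<^sup>2 > 0"
    if "j < CARD('n)" "k < CARD('n)" "j \<noteq> k" for j k
    using u inj that unfolding Omega_def inj_on_def by auto
  show ?thesis
    unfolding Vpot_def[abs_def]
    by (intro differentiable_add differentiable_mult differentiable_const differentiable_sum
        ballI finite_lessThan finite_atLeastLessThan differentiable_pair_term
        Upot_differentiable W pos) (use n2 in auto)
qed

lemma Vpot_translate: "Vpot e \<sigma> W (u + (\<chi> j. c)) = Vpot e \<sigma> W u"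
  by (simp add: Vpot_def)

(* All summands of V are bounded below (U by -1, W by m), so each one is at most V plus a
   constant. *)
lemma Vpot_bounds_terms:
  fixes e :: "nat \<Rightarrow> 'n::finite"
  assumes inj: "inj_on e {..<CARD('n)}" and sigma: "\<sigma> = 0 \<or> \<sigma> = 1"
    and m: "\<And>x. x > 0 \<Longrightarrow> m \<le> W x"
  obtains B where
    "\<And>u j. u \<in> Omega \<Longrightarrow> j < CARD('n) - 1 \<Longrightarrow>
       Upot ((norm (u $ e (Suc j) - u $ e j))\<^sup>2) \<le> Vpot e \<sigma> W u + B"
    "\<And>u j k. u \<in> Omega \<Longrightarrow> j < k \<Longrightarrow> k < CARD('n) \<Longrightarrow>
       W ((norm (u $ e j - u $ e k))\<^sup>2) \<le> Vpot e \<sigma> W u + B"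
proof -
  define N where "N = CARD('n)"
  define K where "K = max 1 (-m)"
  define P where "P = Sigma {..<N} (\<lambda>j. {Suc j..<N})"
  define U_term where "U_term u j = Upot ((norm (u $ e (Suc j) - u $ e j))\<^sup>2)"
    for u :: "real^2^'n" and j
  define W_term where "W_term u jk = W ((norm (u $ e (fst jk) - u $ e (snd jk)))\<^sup>2)"
    for u :: "real^2^'n" and jk
  define \<sigma>_term where "\<sigma>_term u = \<sigma> * Upot ((norm (u $ e (N - 1) - u $ e 0))\<^sup>2)"
    for u :: "real^2^'n"
  have N: "N \<ge> 1" "finite P"
    by (simp_all add: N_def P_def Suc_leI)
  have K: "K \<ge> 1"
    by (simp add: K_def)
  have V: "Vpot e \<sigma> W u = sum (U_term u) {..<N - 1} + \<sigma>_term u + sum (W_term u) P" for u :: "real^2^'n"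
    unfolding Vpot_def N_def P_def U_term_def \<sigma>_term_def W_term_def
    by (simp add: sum.Sigma split_def)
  have U_ge: "-K \<le> U_term u j" for u :: "real^2^'n" and j
    using Upot_ge[of "(norm (u $ e (Suc j) - u $ e j))\<^sup>2"] K by (simp add: U_term_def)
  have \<sigma>_ge: "-K \<le> \<sigma>_term u" for u :: "real^2^'n"
    using Upot_ge[of "(norm (u $ e (N - 1) - u $ e 0))\<^sup>2"] K sigma
    by (auto simp: \<sigma>_term_def)
  have W_ge: "-K \<le> W_term u jk" if "u \<in> Omega" "jk \<in> P" for u :: "real^2^'n" and jk
  proof -
    have "e (fst jk) \<noteq> e (snd jk)"
      using inj that(2) unfolding P_def N_def inj_on_def by fastforce
    then have "m \<le> W_term u jk"
      using that(1) m unfolding Omega_def W_term_def by simp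
    then show ?thesis
      by (simp add: K_def)
  qed
  have U_sum: "-K * (N - 1) \<le> sum (U_term u) {..<N - 1}" for u :: "real^2^'n"
    using sum_bounded_below[of "{..<N - 1}" "-K" "U_term u"] U_ge by (simp add: mult.commute)
  have W_sum: "-K * card P \<le> sum (W_term u) P" if "u \<in> Omega" for u :: "real^2^'n"
    using sum_bounded_below[of P "-K" "W_term u"] W_ge[OF that] by (simp add: mult.commute)
  show thesis
  proof (rule that[of "K * (N + card P)"])
    fix u :: "real^2^'n" and j assume "u \<in> Omega" "j < CARD('n) - 1"
    then have "U_term u j \<le> sum (U_term u) {..<N - 1} + K * card {..<N - 1}"
      using K U_ge by (intro member_le_sum_bounded_below) (auto simp: N_def)
    then show "Upot ((norm (u $ e (Suc j) - u $ e j))\<^sup>2) \<le> Vpot e \<sigma> W u + K * (N + card P)"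
      using V[of u] \<sigma>_ge[of u] W_sum[OF \<open>u \<in> Omega\<close>] N K
      by (simp add: U_term_def of_nat_diff algebra_simps)
  next
    fix u :: "real^2^'n" and j k assume "u \<in> Omega" "j < k" "k < CARD('n)"
    then have "W_term u (j, k) \<le> sum (W_term u) P + K * card P"
      using K W_ge N(2) by (intro member_le_sum_bounded_below) (auto simp: N_def P_def)
    then show "W ((norm (u $ e j - u $ e k))\<^sup>2) \<le> Vpot e \<sigma> W u + K * (N + card P)"
      using V[of u] \<sigma>_ge[of u] U_sum[of u] N K
      by (simp add: W_term_def of_nat_diff algebra_simps)
  qed
qed

lemma Vpot_sublevel_separated:
  fixes e :: "nat \<Rightarrow> 'n::finite"
  assumes e_bij: "bij_betw e {..<CARD('n)} UNIV" and sigma: "\<sigma> = 0 \<or> \<sigma> = 1"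
    and m: "\<And>x. x > 0 \<Longrightarrow> m \<le> W x" and W_lim0: "filterlim W at_top (at_right 0)"
  obtains \<delta> where "\<delta> > 0"
    "\<And>u p q. u \<in> Omega \<Longrightarrow> Vpot e \<sigma> W u \<le> c \<Longrightarrow> p \<noteq> q \<Longrightarrow>
       \<delta> \<le> (norm (u $ p - u $ q))\<^sup>2"
proof -
  obtain B where W_le: "\<And>(u :: real^2^'n) j k. u \<in> Omega \<Longrightarrow> j < k \<Longrightarrow> k < CARD('n) \<Longrightarrow>
       W ((norm (u $ e j - u $ e k))\<^sup>2) \<le> Vpot e \<sigma> W u + B"
    by (rule Vpot_bounds_terms[OF bij_betw_imp_inj_on[OF e_bij] sigma m]) auto
  have "eventually (\<lambda>x. c + B < W x) (at_right (0::real))"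
    using W_lim0 by (simp add: filterlim_at_top_dense)
  then obtain \<delta> where \<delta>: "\<delta> > 0" "\<And>x. 0 < x \<Longrightarrow> x < \<delta> \<Longrightarrow> c + B < W x"
    by (auto simp: eventually_at_right_field)
  show thesis
  proof (rule that[OF \<delta>(1)])
    fix u :: "real^2^'n" and p q :: 'n
    assume u: "u \<in> Omega" "Vpot e \<sigma> W u \<le> c" and "p \<noteq> q"
    obtain j k where jk: "j < CARD('n)" "k < CARD('n)" "e j = p" "e k = q" "j \<noteq> k"
      using bij_betw_imp_surj_on[OF e_bij] \<open>p \<noteq> q\<close> by (metis UNIV_I imageE lessThan_iff)
    have "W ((norm (u $ p - u $ q))\<^sup>2) \<le> c + B"
      using jk W_le[OF u(1), of j k] W_le[OF u(1), of k j] u(2)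
      by (cases "j < k") (auto simp: norm_minus_commute)
    moreover have "0 < (norm (u $ p - u $ q))\<^sup>2"
      using u(1) \<open>p \<noteq> q\<close> unfolding Omega_def by simp
    ultimately show "\<delta> \<le> (norm (u $ p - u $ q))\<^sup>2"
      by (meson \<delta>(2) not_less)
  qed
qed

lemma Vpot_sublevel_bounded:
  fixes e :: "nat \<Rightarrow> 'n::finite"
  assumes e_bij: "bij_betw e {..<CARD('n)} UNIV" and sigma: "\<sigma> = 0 \<or> \<sigma> = 1"
    and m: "\<And>x. x > 0 \<Longrightarrow> m \<le> W x"
  obtains R where
    "\<And>u. u \<in> Omega \<Longrightarrow> Vpot e \<sigma> W u \<le> c \<Longrightarrow> (\<Sum>j\<in>UNIV. u $ j) = 0 \<Longrightarrow> norm u \<le> R"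
proof -
  obtain B where U_le: "\<And>(u :: real^2^'n) j. u \<in> Omega \<Longrightarrow> j < CARD('n) - 1 \<Longrightarrow>
       Upot ((norm (u $ e (Suc j) - u $ e j))\<^sup>2) \<le> Vpot e \<sigma> W u + B"
    by (rule Vpot_bounds_terms[OF bij_betw_imp_inj_on[OF e_bij] sigma m]) auto
  define D where "D = \<bar>c + B\<bar> + 2"
  show thesis
  proof (rule that)
    fix u :: "real^2^'n"
    assume u: "u \<in> Omega" "Vpot e \<sigma> W u \<le> c" and centred: "(\<Sum>j\<in>UNIV. u $ j) = 0"
    have step: "norm (u $ e (Suc i) - u $ e i) \<le> D" if "i < CARD('n) - 1" for i
      using U_le[OF u(1) that] u(2) unfolding D_def by (intro norm_le_if_Upot_le) simp
    have ordered: "norm (u $ e k - u $ e j) \<le> CARD('n) * D" if "j \<le> k" "k < CARD('n)" for j k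
    proof -
      have "norm (u $ e k - u $ e j) \<le> real (k - j) * D"
        using that step by (intro norm_diff_le_steps[where x = "\<lambda>i. u $ e i"]) auto
      also have "\<dots> \<le> CARD('n) * D"
        using that by (intro mult_right_mono) (auto simp: D_def)
      finally show ?thesis .
    qed
    have "norm (u $ p - u $ q) \<le> CARD('n) * D" for p q
    proof -
      obtain j k where "j < CARD('n)" "k < CARD('n)" "e j = q" "e k = p"
        using bij_betw_imp_surj_on[OF e_bij] by (metis UNIV_I imageE lessThan_iff)
      then show ?thesis
        using ordered[of j k] ordered[of k j] by (cases "j \<le> k") (auto simp: norm_minus_commute)
    qed
    then show "norm u \<le> CARD('n) * (CARD('n) * D)"
      by (rule norm_le_if_centred[OF centred])
  qed
qed

lemma linear_rho: "linear (rho g)"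
  by (rule linearI) (simp_all add: rho_def vec_eq_iff matrix_vector_right_distrib
      matrix_vector_mult_scaleR)

lemma norm_rho:
  assumes "g \<in> SnO2"
  shows "norm (rho g u) = norm u"
proof -
  obtain \<gamma> A where g: "g = (\<gamma>, A)" "\<gamma> permutes UNIV" "orthogonal_matrix A"
    using assms unfolding SnO2_def by auto
  have "orthogonal_transformation ((*v) A)"
    using g(3) by (simp add: orthogonal_transformation_matrix)
  then have "norm (A *v x) = norm x" for x
    by (rule orthogonal_transformation_norm)
  then have "norm (rho g u) = sqrt (\<Sum>j\<in>UNIV. (norm (u $ \<gamma> j))\<^sup>2)"
    by (simp add: g(1) rho_def norm_vec_def L2_set_def)
  also have "\<dots> = norm u"
    using sum.reindex_bij_betw[OF permutes_imp_bij[OF g(2)], of "\<lambda>j. (norm (u $ j))\<^sup>2"]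
    by (simp add: norm_vec_def L2_set_def)
  finally show ?thesis .
qed

lemma open_Omega: "open (Omega :: (real^2^'n::finite) set)"
proof -
  have "Omega = (\<Inter>p. \<Inter>q\<in>UNIV - {p}. {u::real^2^'n::finite. u $ p \<noteq> u $ q})"
    unfolding Omega_def by auto
  also have "open \<dots>"
    by (intro open_INT finite_Diff ballI open_Collect_neq continuous_intros) simp_all
  finally show ?thesis .
qed

definition Fix0 :: "(('n::finite \<Rightarrow> 'n) \<times> (real^2^2)) set \<Rightarrow> (real^2^'n) set" where
  "Fix0 H = {u \<in> Fix H. (\<Sum>j\<in>UNIV. u $ j) = 0}"

lemma Omega0_Int_Fix: "Omega0 \<inter> Fix H = Omega \<inter> Fix0 H"
  unfolding Omega0_def Fix0_def by auto

lemma subspace_Fix0: "subspace (Fix0 H)"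
  unfolding subspace_def Fix0_def Fix_def
  by (simp add: linear_0[OF linear_rho] linear_add[OF linear_rho] linear_scale[OF linear_rho]
      sum.distrib scaleR_sum_right[symmetric])

lemma closed_Fix0: "closed (Fix0 H)"
proof -
  have "Fix0 H = {u. (\<Sum>j\<in>UNIV. u $ j) = 0} \<inter> (\<Inter>g\<in>H. {u. rho g u = u})"
    unfolding Fix0_def Fix_def by auto
  also have "closed \<dots>"
    by (intro closed_Int closed_INT ballI closed_Collect_eq continuous_intros
        linear_continuous_on linear_rho[THEN linear_conv_bounded_linear[THEN iffD1]])
  finally show ?thesis .
qed

lemma inner_const_vec: "u \<bullet> (\<chi> j. c) = (\<Sum>j\<in>UNIV. u $ j) \<bullet> c"
  by (simp add: inner_vec_def inner_sum_left)

lemma Vpot_attains_min_on_component: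
  fixes e :: "nat \<Rightarrow> 'n::finite"
  assumes n2: "CARD('n) \<ge> 2" and e_bij: "bij_betw e {..<CARD('n)} UNIV"
    and sigma: "\<sigma> = 0 \<or> \<sigma> = 1" and W_diff: "\<And>x. x > 0 \<Longrightarrow> W differentiable (at x)"
    and W_lim0: "filterlim W at_top (at_right 0)" and W_lim_inf: "(W \<longlongrightarrow> l) at_top"
    and C: "C \<in> components (Omega \<inter> Fix0 H)"
  shows "\<exists>a\<in>C. \<forall>u\<in>C. Vpot e \<sigma> W a \<le> Vpot e \<sigma> W u"
proof (rule continuous_attains_inf_proper)
  show "closedin (top_of_set (Omega \<inter> Fix0 H)) C" "C \<noteq> {}"
    using C by (simp_all add: closedin_component in_components_nonempty)
  have "continuous_on Omega (Vpot e \<sigma> W)"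
    using Vpot_differentiable[OF n2 bij_betw_imp_inj_on[OF e_bij] _ W_diff]
    by (meson continuous_at_imp_continuous_on differentiable_imp_continuous_within)
  then show "continuous_on C (Vpot e \<sigma> W)"
    by (rule continuous_on_subset) (use C in_components_subset in blast)
  have "continuous_on {0<..} W"
    using W_diff by (meson continuous_at_imp_continuous_on differentiable_imp_continuous_within
        greaterThan_iff)
  then obtain m where m: "\<And>x. x > 0 \<Longrightarrow> m \<le> W x"
    using continuous_on_pos_bounded_below W_lim0 W_lim_inf by blast
  fix c
  obtain \<delta> where \<delta>: "\<delta> > 0"
    and sep: "\<And>u p q. u \<in> Omega \<Longrightarrow> Vpot e \<sigma> W u \<le> c \<Longrightarrow> p \<noteq> q \<Longrightarrow>
       \<delta> \<le> (norm (u $ p - u $ q))\<^sup>2"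
    by (rule Vpot_sublevel_separated[OF e_bij sigma m W_lim0]) auto
  obtain R where
    bnd: "\<And>u. u \<in> Omega \<Longrightarrow> Vpot e \<sigma> W u \<le> c \<Longrightarrow> (\<Sum>j\<in>UNIV. u $ j) = 0 \<Longrightarrow>
      norm u \<le> R"
    by (rule Vpot_sublevel_bounded[OF e_bij sigma m]) auto
  define K where
    "K = {u. (\<forall>p q. p \<noteq> q \<longrightarrow> \<delta> \<le> (norm (u $ p - u $ q))\<^sup>2) \<and> norm u \<le> R} \<inter> Fix0 H"
  have "closed K"
  proof -
    have "K = (\<Inter>p. \<Inter>q\<in>UNIV - {p}. {u. \<delta> \<le> (norm (u $ p - u $ q))\<^sup>2})
        \<inter> cball 0 R \<inter> Fix0 H"
      unfolding K_def by auto
    also have "closed \<dots>"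
      by (intro closed_Int closed_INT ballI closed_Collect_le continuous_intros closed_cball closed_Fix0)
    finally show ?thesis .
  qed
  moreover have "bounded K"
    unfolding bounded_iff K_def by blast
  moreover have "K \<subseteq> Omega \<inter> Fix0 H"
    using \<delta> unfolding K_def Omega_def by force
  moreover have "{u \<in> Omega \<inter> Fix0 H. Vpot e \<sigma> W u \<le> c} \<subseteq> K"
    unfolding K_def Fix0_def by (auto intro: sep bnd)
  ultimately show "\<exists>K. compact K \<and> K \<subseteq> Omega \<inter> Fix0 H \<and>
      {u \<in> Omega \<inter> Fix0 H. Vpot e \<sigma> W u \<le> c} \<subseteq> K"
    by (meson compact_eq_bounded_closed)
qed

lemma Vpot_has_derivative_0_at_min_on_component:
  fixes e :: "nat \<Rightarrow> 'n::finite"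
  assumes n2: "CARD('n) \<ge> 2" and inj: "inj_on e {..<CARD('n)}"
    and W_diff: "\<And>x. x > 0 \<Longrightarrow> W differentiable (at x)"
    and H: "H \<subseteq> SnO2"
    and H_inv: "\<And>g u. g \<in> H \<Longrightarrow> u \<in> Omega \<Longrightarrow> Vpot e \<sigma> W (rho g u) = Vpot e \<sigma> W u"
    and C: "C \<in> components (Omega \<inter> Fix0 H)"
    and a: "a \<in> C" "\<And>u. u \<in> C \<Longrightarrow> Vpot e \<sigma> W a \<le> Vpot e \<sigma> W u"
  shows "(Vpot e \<sigma> W has_derivative (\<lambda>h. 0)) (at a)"
proof -
  have a_in: "a \<in> Omega" "a \<in> Fix0 H"
    using C a(1) in_components_subset by blast+
  then obtain D where D: "(Vpot e \<sigma> W has_derivative D) (at a)"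
    using Vpot_differentiable[OF n2 inj _ W_diff] by (auto simp: differentiable_def)
  have "eventually (\<lambda>u. u \<in> Fix0 H \<longrightarrow> Vpot e \<sigma> W a \<le> Vpot e \<sigma> W u) (nhds a)"
    using eventually_nhds_in_component_open_Int_convex[OF open_Omega
        subspace_imp_convex[OF subspace_Fix0] C a(1)]
    by (rule eventually_mono) (use a(2) in blast)
  then have on_Fix0: "D x = 0" if "x \<in> Fix0 H" for x
    using has_derivative_eq_0_on_subspace_at_local_min[OF D subspace_Fix0 a_in(2) that] by blast
  have invariant: "D (rho g x) = D x" if "g \<in> H" for g x
    using a_in that H_inv
    by (intro has_derivative_invariant[OF D _ _ open_Omega]
        linear_rho[THEN linear_conv_bounded_linear[THEN iffD1]]) (auto simp: Fix0_def Fix_def)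
  have translation: "D (\<chi> j. c) = 0" for c
  proof (rule has_derivative_eq_0_at_local_min_along[OF D])
    have "a + t *\<^sub>R (\<chi> j. c) = a + (\<chi> j. t *\<^sub>R c)" for t
      by (simp add: vec_eq_iff)
    then show "eventually (\<lambda>t. Vpot e \<sigma> W a \<le> Vpot e \<sigma> W (a + t *\<^sub>R (\<chi> j. c))) (at 0)"
      by (simp add: Vpot_translate)
  qed
  have "D = (\<lambda>h. 0)"
  proof (rule symmetric_linear_functional_eq_0[where \<G> = "rho ` H" and Z = "range (\<lambda>c. \<chi> j. c)"])
    show "linear D"
      using D has_derivative_linear by blast
    fix x
    assume fixed: "\<forall>T\<in>rho ` H. T x = x" and "\<forall>z\<in>range (\<lambda>c. \<chi> j. c). x \<bullet> z = 0"
    then have "(\<Sum>j\<in>UNIV. x $ j) \<bullet> (\<Sum>j\<in>UNIV. x $ j) = 0"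
      by (simp add: inner_const_vec)
    with fixed show "D x = 0"
      by (intro on_Fix0) (simp add: Fix0_def Fix_def)
  qed (use H norm_rho invariant translation in auto)
  then show ?thesis
    using D by simp
qed

theorem theorem1:
  fixes e :: "nat \<Rightarrow> 'n::finite"
    and \<sigma> :: real
    and W W' W'' :: "real \<Rightarrow> real"
    and G H :: "(('n \<Rightarrow> 'n) \<times> (real^2^2)) set"
  assumes n2: "CARD('n) \<ge> 2"
    and e_bij: "bij_betw e {..<CARD('n)} UNIV"
    and sigma: "\<sigma> = 0 \<or> \<sigma> = 1"
    and W_deriv: "\<forall>x>0. (W has_real_derivative W' x) (at x)"
    and W'_deriv: "\<forall>x>0. (W' has_real_derivative W'' x) (at x)"
    and W''_cont: "continuous_on {0<..} W''"
    and W_lim0: "filterlim W at_top (at_right 0)"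
    and W'_lim0: "filterlim (\<lambda>x. - W' x) at_top (at_right 0)"
    and W_liminf: "(W \<longlongrightarrow> 0) at_top"
    and W'_liminf: "(W' \<longlongrightarrow> 0) at_top"
    and G_sub: "is_subgroup_SnO2 G"
    and G_inv: "\<forall>g\<in>G. \<forall>u\<in>Omega. Vpot e \<sigma> W (rho g u) = Vpot e \<sigma> W u"
    and H_sub: "is_subgroup_SnO2 H" "H \<subseteq> G"
  shows "\<forall>C \<in> components (Omega0 \<inter> Fix H).
           (\<exists>a\<in>C. \<forall>u\<in>C. Vpot e \<sigma> W a \<le> Vpot e \<sigma> W u) \<and>
           (\<forall>a\<in>C. (\<forall>u\<in>C. Vpot e \<sigma> W a \<le> Vpot e \<sigma> W u) \<longrightarrow>
                   (Vpot e \<sigma> W has_derivative (\<lambda>h. 0)) (at a))"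
proof
  fix C assume C: "C \<in> components (Omega0 \<inter> Fix H)"
  then have C': "C \<in> components (Omega \<inter> Fix0 H)"
    by (simp add: Omega0_Int_Fix)
  have W_diff: "W differentiable (at x)" if "x > 0" for x
    using W_deriv that real_differentiable_def by blast
  have "H \<subseteq> SnO2"
    using H_sub(1) by (simp add: is_subgroup_SnO2_def)
  moreover have "\<And>g u. g \<in> H \<Longrightarrow> u \<in> Omega \<Longrightarrow> Vpot e \<sigma> W (rho g u) = Vpot e \<sigma> W u"
    using G_inv H_sub(2) by blast
  ultimately show "(\<exists>a\<in>C. \<forall>u\<in>C. Vpot e \<sigma> W a \<le> Vpot e \<sigma> W u) \<and>
      (\<forall>a\<in>C. (\<forall>u\<in>C. Vpot e \<sigma> W a \<le> Vpot e \<sigma> W u) \<longrightarrow>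
        (Vpot e \<sigma> W has_derivative (\<lambda>h. 0)) (at a))"
    using Vpot_attains_min_on_component[OF n2 e_bij sigma W_diff W_lim0 W_liminf C']
      Vpot_has_derivative_0_at_min_on_component[OF n2 bij_betw_imp_inj_on[OF e_bij] W_diff _ _ C']
    by blast
qed

end
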